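(* Let $\mathbb{S}\subseteq\mathbb{R}$ be an interval, let $\gamma>0$, let $Q:\mathbb{S}\to\mathbb{R}$ be differentiable with $q=Q'$, and let $$H(z)=\gamma\log\big(1+e^{Q(z)/\gamma}\big),\qquad p(z)=\frac{1}{1+e^{-Q(z)/\gamma}},$$ with $H$ twice continuously differentiable on $\mathbb{S}$. Then the scalar matching loss $\mathcal{L}_m(\hat s,s)=H(\hat s)-H(s)-(\hat s-s)H'(s)$ is convex in $\hat s$ over $\mathbb{S}$ (for all $s\in\mathbb{S}$) if and only if $$q'(z)+\frac{1}{\gamma}\,[1-p(z)]\,q^2(z)\ge0\quad\text{for all }z\in\mathbb{S}.$$
   Context: $H$ is the $\gamma$-regularized composite Softplus primitive; its derivative (the link) is $H'(z)=q(z)p(z)$. *)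

theory Defs
  imports "HOL-Analysis.Analysis"
begin

definition softplusH :: "real \<Rightarrow> (real \<Rightarrow> real) \<Rightarrow> real \<Rightarrow> real" where
  "softplusH \<gamma> Q z = \<gamma> * ln (1 + exp (Q z / \<gamma>))"

definition sigmoidP :: "real \<Rightarrow> (real \<Rightarrow> real) \<Rightarrow> real \<Rightarrow> real" where
  "sigmoidP \<gamma> Q z = 1 / (1 + exp (- Q z / \<gamma>))"

definition matching_loss :: "(real \<Rightarrow> real) \<Rightarrow> (real \<Rightarrow> real) \<Rightarrow> real \<Rightarrow> real \<Rightarrow> real" where
  "matching_loss H H' shat s = H shat - H s - (shat - s) * H' s"

end

(*
  The matching loss differs from H by an affine function of shat, so it is convex for every s
  exactly when H is convex on S, i.e. when H'' >= 0 on S. Differentiating the link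
  H' = q p with p' = p (1 - p) q / gamma gives H'' = p (q' + (1/gamma) (1 - p) q^2), and p > 0.
*)
theory Submission
  imports Defs
begin

lemma at_within_interval_neq_bot:
  fixes S :: "real set"
  assumes "is_interval S" and "\<exists>a\<in>S. \<exists>b\<in>S. a < b" and "z \<in> S"
  shows "at z within S \<noteq> bot"
proof -
  have "S \<noteq> {x}" for x using assms(2) by auto
  then have "z islimpt S"
    using connected_imp_perfect is_interval_connected assms(1,3) by blast
  then show ?thesis by (simp add: trivial_limit_within)
qed

lemma MVT_within:
  fixes f f' :: "real \<Rightarrow> real"
  assumes "a < b" and "{a..b} \<subseteq> S"
    and f': "\<And>x. x \<in> S \<Longrightarrow> (f has_real_derivative f' x) (at x within S)"
  shows "\<exists>\<xi>. a < \<xi> \<and> \<xi> < b \<and> f b - f a = (b - a) * f' \<xi>"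
proof -
  have "(f has_derivative (*) (f' x)) (at x within {a..b})" if "a \<le> x" "x \<le> b" for x
    using has_field_derivative_subset[OF f' assms(2)] assms(2) that
    by (auto simp: has_field_derivative_def)
  from mvt_simple[OF assms(1) this] obtain \<xi> where "\<xi> \<in> {a<..<b}" "f b - f a = f' \<xi> * (b - a)"
    by blast
  then show ?thesis by (auto simp: mult.commute)
qed

lemma convex_on_if_deriv_mono_on:
  fixes f f' :: "real \<Rightarrow> real"
  assumes "is_interval S"
    and f': "\<And>x. x \<in> S \<Longrightarrow> (f has_real_derivative f' x) (at x within S)"
    and mono: "mono_on S f'"
  shows "convex_on S f"
proof (rule pos_convex_function[where f' = f'])
  show S: "convex S" using assms(1) is_interval_convex_1 by blast
  fix x y assume xy: "x \<in> S" "y \<in> S"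
  show "f' x * (y - x) \<le> f y - f x"
  proof (cases x y rule: linorder_cases)
    case less
    then obtain \<xi> where \<xi>: "x < \<xi>" "\<xi> < y" "f y - f x = (y - x) * f' \<xi>"
      using MVT_within[OF less atMostAtLeast_subset_convex[OF S xy less] f'] by blast
    with xy atMostAtLeast_subset_convex[OF S xy less] have "f' x \<le> f' \<xi>"
      by (intro mono_onD[OF mono]) auto
    with less have "(y - x) * f' x \<le> (y - x) * f' \<xi>" by (intro mult_left_mono) auto
    with \<xi>(3) show ?thesis by (simp add: mult.commute)
  next
    case greater
    then obtain \<xi> where \<xi>: "y < \<xi>" "\<xi> < x" "f x - f y = (x - y) * f' \<xi>"
      using MVT_within[OF greater atMostAtLeast_subset_convex[OF S xy(2,1) greater] f'] by blast
    with xy atMostAtLeast_subset_convex[OF S xy(2,1) greater] have "f' \<xi> \<le> f' x"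
      by (intro mono_onD[OF mono]) auto
    with greater have "(x - y) * f' \<xi> \<le> (x - y) * f' x" by (intro mult_left_mono) auto
    moreover have "f' x * (y - x) = - ((x - y) * f' x)" by (simp add: algebra_simps)
    ultimately show ?thesis using \<xi>(3) by linarith
  qed simp
qed

lemma deriv_mono_on_if_convex_on:
  fixes f f' :: "real \<Rightarrow> real"
  assumes cv: "convex_on S f"
    and f': "\<And>x. x \<in> S \<Longrightarrow> (f has_real_derivative f' x) (at x within S)"
  shows "mono_on S f'"
proof (rule mono_onI)
  fix x y assume xy: "x \<in> S" "y \<in> S" "x \<le> y"
  show "f' x \<le> f' y"
  proof (cases "x = y")
    case False
    with xy have lt: "x < y" by simp
    have sub: "{x<..<y} \<subseteq> S"
      using atMostAtLeast_subset_convex[OF convex_on_imp_convex[OF cv] xy(1,2) lt] by auto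
    have "f' x \<le> (f y - f x) / (y - x)"
    proof (rule tendsto_upperbound)
      show "((\<lambda>w. (f w - f x) / (w - x)) \<longlongrightarrow> f' x) (at x within {x<..<y})"
        using has_field_derivative_subset[OF f'[OF xy(1)] sub] by (simp add: has_field_derivative_iff)
      show "\<forall>\<^sub>F w in at x within {x<..<y}. (f w - f x) / (w - x) \<le> (f y - f x) / (y - x)"
        unfolding eventually_at_filter
      proof (intro always_eventually allI impI)
        fix w assume "w \<noteq> x" "w \<in> {x<..<y}"
        then have "(f x - f w) / (x - w) \<le> (f x - f y) / (x - y)"
          using convex_on_slope_le(1)[OF cv xy(1,2)] by simp
        then show "(f w - f x) / (w - x) \<le> (f y - f x) / (y - x)"
          by (metis minus_diff_eq minus_divide_divide)
      qed
      show "at x within {x<..<y} \<noteq> bot"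
        using islimpt_greaterThanLessThan1[OF lt] by (simp add: trivial_limit_within)
    qed
    also have "\<dots> \<le> f' y"
    proof (rule tendsto_lowerbound)
      show "((\<lambda>w. (f w - f y) / (w - y)) \<longlongrightarrow> f' y) (at y within {x<..<y})"
        using has_field_derivative_subset[OF f'[OF xy(2)] sub] by (simp add: has_field_derivative_iff)
      show "\<forall>\<^sub>F w in at y within {x<..<y}. (f y - f x) / (y - x) \<le> (f w - f y) / (w - y)"
        unfolding eventually_at_filter
      proof (intro always_eventually allI impI)
        fix w assume "w \<noteq> y" "w \<in> {x<..<y}"
        then have "(f x - f y) / (x - y) \<le> (f w - f y) / (w - y)"
          using convex_on_slope_le(2)[OF cv xy(1,2)] by simp
        then show "(f y - f x) / (y - x) \<le> (f w - f y) / (w - y)"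
          by (metis minus_diff_eq minus_divide_divide)
      qed
      show "at y within {x<..<y} \<noteq> bot"
        using islimpt_greaterThanLessThan2[OF lt] by (simp add: trivial_limit_within)
    qed
    finally show ?thesis .
  qed simp
qed

lemma deriv_nonneg_if_mono_on:
  fixes g :: "real \<Rightarrow> real"
  assumes "mono_on S g" and "(g has_real_derivative g') (at z within S)"
    and "z \<in> S" and "at z within S \<noteq> bot"
  shows "g' \<ge> 0"
proof (rule tendsto_lowerbound)
  show "((\<lambda>w. (g w - g z) / (w - z)) \<longlongrightarrow> g') (at z within S)"
    using assms(2) by (simp add: has_field_derivative_iff)
  show "\<forall>\<^sub>F w in at z within S. 0 \<le> (g w - g z) / (w - z)"
    unfolding eventually_at_filter
  proof (intro always_eventually allI impI)
    fix w assume "w \<noteq> z" "w \<in> S"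
    with assms(1,3) show "0 \<le> (g w - g z) / (w - z)"
      by (cases "w < z") (auto simp: mono_onD divide_nonpos_neg)
  qed
qed fact

lemma mono_on_if_deriv_nonneg:
  fixes g g' :: "real \<Rightarrow> real"
  assumes "is_interval S"
    and g': "\<And>x. x \<in> S \<Longrightarrow> (g has_real_derivative g' x) (at x within S)"
    and nonneg: "\<And>x. x \<in> S \<Longrightarrow> g' x \<ge> 0"
  shows "mono_on S g"
proof (rule mono_onI)
  fix x y assume xy: "x \<in> S" "y \<in> S" "x \<le> y"
  show "g x \<le> g y"
  proof (cases "x = y")
    case False
    with xy have lt: "x < y" by simp
    have sub: "{x..y} \<subseteq> S"
      using atMostAtLeast_subset_convex[OF is_interval_convex[OF assms(1)] xy(1,2) lt] .
    obtain \<xi> where \<xi>: "x < \<xi>" "\<xi> < y" "g y - g x = (y - x) * g' \<xi>"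
      using MVT_within[OF lt sub g'] by blast
    with sub have "g' \<xi> \<ge> 0" by (intro nonneg) auto
    with lt have "(y - x) * g' \<xi> \<ge> 0" by (simp add: mult_nonneg_nonneg)
    with \<xi>(3) show ?thesis by linarith
  qed simp
qed

lemma convex_on_iff_second_deriv_nonneg:
  fixes f f' f'' :: "real \<Rightarrow> real"
  assumes S: "is_interval S" "\<exists>a\<in>S. \<exists>b\<in>S. a < b"
    and f': "\<And>x. x \<in> S \<Longrightarrow> (f has_real_derivative f' x) (at x within S)"
    and f'': "\<And>x. x \<in> S \<Longrightarrow> (f' has_real_derivative f'' x) (at x within S)"
  shows "convex_on S f \<longleftrightarrow> (\<forall>x\<in>S. f'' x \<ge> 0)"
proof
  assume "convex_on S f"
  then have "mono_on S f'" using f' by (rule deriv_mono_on_if_convex_on)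
  then show "\<forall>x\<in>S. f'' x \<ge> 0"
    using deriv_nonneg_if_mono_on f'' at_within_interval_neq_bot[OF S] by blast
next
  assume "\<forall>x\<in>S. f'' x \<ge> 0"
  then have "mono_on S f'" by (intro mono_on_if_deriv_nonneg[OF S(1) f'']) auto
  with convex_on_if_deriv_mono_on[OF S(1) f'] show "convex_on S f" by simp
qed

lemma one_plus_exp_pos: "0 < 1 + exp (x::real)"
  by (simp add: add_pos_pos)

lemma sigmoidP_eq: "sigmoidP \<gamma> Q z = exp (Q z / \<gamma>) / (1 + exp (Q z / \<gamma>))"
  unfolding sigmoidP_def by (simp add: exp_minus field_simps)

lemma sigmoidP_pos: "sigmoidP \<gamma> Q z > 0"
  unfolding sigmoidP_eq by (simp add: one_plus_exp_pos)

lemma softplusH_has_real_derivative: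
  assumes "\<gamma> \<noteq> 0" and "(Q has_real_derivative q) (at z within S)"
  shows "(softplusH \<gamma> Q has_real_derivative q * sigmoidP \<gamma> Q z) (at z within S)"
proof -
  have "(softplusH \<gamma> Q has_real_derivative
      \<gamma> * (exp (Q z / \<gamma>) * (q / \<gamma>) / (1 + exp (Q z / \<gamma>)))) (at z within S)"
    unfolding softplusH_def[abs_def]
    by (rule derivative_eq_intros assms refl | simp add: one_plus_exp_pos)+
  then show ?thesis using assms(1) by (simp add: sigmoidP_eq mult.commute)
qed

lemma sigmoidP_has_real_derivative:
  assumes "\<gamma> \<noteq> 0" and "(Q has_real_derivative q) (at z within S)"
  shows "(sigmoidP \<gamma> Q has_real_derivative
      sigmoidP \<gamma> Q z * (1 - sigmoidP \<gamma> Q z) * q / \<gamma>) (at z within S)"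
proof -
  have ne: "1 + exp (Q z / \<gamma>) \<noteq> 0" using one_plus_exp_pos by (rule less_imp_neq[symmetric])
  have "((\<lambda>z. exp (Q z / \<gamma>) / (1 + exp (Q z / \<gamma>))) has_real_derivative
      exp (Q z / \<gamma>) / (1 + exp (Q z / \<gamma>)) * (1 - exp (Q z / \<gamma>) / (1 + exp (Q z / \<gamma>)))
        * q / \<gamma>) (at z within S)"
    by (rule derivative_eq_intros assms refl | simp add: ne)+
      (use assms(1) ne in \<open>simp add: field_simps\<close>)
  then show ?thesis by (simp only: sigmoidP_eq[abs_def])
qed

lemma softplusH_second_deriv_eq:
  assumes "\<gamma> \<noteq> 0" and nontriv: "\<And>z. z \<in> S \<Longrightarrow> at z within S \<noteq> bot"
    and Q': "\<And>z. z \<in> S \<Longrightarrow> (Q has_real_derivative q z) (at z within S)"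
    and q': "\<And>z. z \<in> S \<Longrightarrow> (q has_real_derivative q' z) (at z within S)"
    and H1: "\<And>z. z \<in> S \<Longrightarrow> (softplusH \<gamma> Q has_real_derivative H1 z) (at z within S)"
    and H2: "\<And>z. z \<in> S \<Longrightarrow> (H1 has_real_derivative H2 z) (at z within S)"
    and z: "z \<in> S"
  shows "H2 z = sigmoidP \<gamma> Q z * (q' z + (1 / \<gamma>) * (1 - sigmoidP \<gamma> Q z) * (q z)^2)"
proof -
  let ?p = "sigmoidP \<gamma> Q"
  have H1_eq: "H1 x = q x * ?p x" if "x \<in> S" for x
    using has_field_derivative_unique[OF H1[OF that]
        softplusH_has_real_derivative[OF assms(1) Q'[OF that]] nontriv[OF that]] .
  have "((\<lambda>x. q x * ?p x) has_real_derivative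
      ?p z * (q' z + (1 / \<gamma>) * (1 - ?p z) * (q z)^2)) (at z within S)"
    using DERIV_mult[OF q'[OF z] sigmoidP_has_real_derivative[OF assms(1) Q'[OF z]]]
    by (rule DERIV_cong) (use assms(1) in \<open>simp add: field_simps power2_eq_square\<close>)
  then have "(H1 has_real_derivative ?p z * (q' z + (1 / \<gamma>) * (1 - ?p z) * (q z)^2))
      (at z within S)"
    by (rule has_field_derivative_transform_within[OF _ zero_less_one z]) (simp add: H1_eq)
  then show ?thesis
    using has_field_derivative_unique[OF H2[OF z] _ nontriv[OF z]] by blast
qed

lemma convex_on_diff_affine_iff:
  fixes f :: "real \<Rightarrow> real"
  shows "convex_on S (\<lambda>x. f x - (a * x + b)) \<longleftrightarrow> convex_on S f"
proof -
  have affine: "convex_on S (\<lambda>x. a * x + b)" "concave_on S (\<lambda>x. a * x + b)" if "convex S"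
    using that by (auto intro!: convex_on_linorderI concave_on_linorderI simp: algebra_simps)
  show ?thesis
  proof
    assume "convex_on S (\<lambda>x. f x - (a * x + b))"
    with affine(1)[OF convex_on_imp_convex[OF this]]
    show "convex_on S f" using convex_on_add by fastforce
  next
    assume "convex_on S f"
    with affine(2)[OF convex_on_imp_convex[OF this]]
    show "convex_on S (\<lambda>x. f x - (a * x + b))" by (rule convex_on_diff[rotated])
  qed
qed

lemma convex_on_matching_loss_iff:
  "convex_on S (\<lambda>shat. matching_loss H H' shat s) \<longleftrightarrow> convex_on S H"
proof -
  have "matching_loss H H' shat s = H shat - (H' s * shat + (H s - s * H' s))" for shat
    by (simp add: matching_loss_def algebra_simps)
  then show ?thesis by (simp add: convex_on_diff_affine_iff)
qed

theorem corollaryG1: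
  fixes S :: "real set" and \<gamma> :: real and Q q q' H1 H2 :: "real \<Rightarrow> real"
  assumes S_int: "is_interval S"
    and S_nondeg: "\<exists>a\<in>S. \<exists>b\<in>S. a < b"
    and gamma_pos: "\<gamma> > 0"
    and Q_deriv: "\<And>z. z \<in> S \<Longrightarrow> (Q has_real_derivative q z) (at z within S)"
    and q_deriv: "\<And>z. z \<in> S \<Longrightarrow> (q has_real_derivative q' z) (at z within S)"
    and H_deriv1: "\<And>z. z \<in> S \<Longrightarrow> (softplusH \<gamma> Q has_real_derivative H1 z) (at z within S)"
    and H_deriv2: "\<And>z. z \<in> S \<Longrightarrow> (H1 has_real_derivative H2 z) (at z within S)"
    and H2_cont: "continuous_on S H2"
  shows "(\<forall>s\<in>S. convex_on S (\<lambda>shat. matching_loss (softplusH \<gamma> Q) H1 shat s))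
     \<longleftrightarrow> (\<forall>z\<in>S. q' z + (1 / \<gamma>) * (1 - sigmoidP \<gamma> Q z) * (q z)^2 \<ge> 0)"
proof -
  note H2_eq = softplusH_second_deriv_eq[OF _ at_within_interval_neq_bot[OF S_int S_nondeg]
      Q_deriv q_deriv H_deriv1 H_deriv2]
  have "(\<forall>s\<in>S. convex_on S (\<lambda>shat. matching_loss (softplusH \<gamma> Q) H1 shat s))
      \<longleftrightarrow> convex_on S (softplusH \<gamma> Q)"
    using S_nondeg by (auto simp: convex_on_matching_loss_iff)
  also have "\<dots> \<longleftrightarrow> (\<forall>z\<in>S. H2 z \<ge> 0)"
    by (rule convex_on_iff_second_deriv_nonneg[OF S_int S_nondeg H_deriv1 H_deriv2])
  also have "\<dots> \<longleftrightarrow> (\<forall>z\<in>S. q' z + (1 / \<gamma>) * (1 - sigmoidP \<gamma> Q z) * (q z)^2 \<ge> 0)"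
    using gamma_pos by (simp add: H2_eq zero_le_mult_iff sigmoidP_pos[unfolded less_le_not_le])
  finally show ?thesis .
qed

end
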